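(* Let $H$ be a strongly connected simple digraph, let $k$ be a positive integer, and let $T$ be a tournament that does not contain $k$ pairwise vertex-disjoint topological minor copies of $H$. Then there is a set $X$ of at most $2d_{\mathrm{pw}}\|H\|\cdot k\log k$ vertices of $T$ such that $T-X$ does not contain $H$ as a topological minor.
   Context: $\|H\|:=|V(H)|+|A(H)|$; logarithms are base 2. A tournament is a simple digraph with exactly one arc between every pair of distinct vertices. A topological minor copy of $H$ in a digraph $G$ is a subgraph $\widehat H$ of $G$ with a map sending vertices of $H$ to distinct vertices of $\widehat H$ and arcs $(u,v)$ of $H$ to directed paths from the image of $u$ to the image of $v$ that are internally vertex-disjoint, contain no image of a vertex of $H$ as an internal vertex, and together cover every arc and every non-image vertex of $\widehat H$ exactly once; $G$ contains $H$ as a topological minor if it has such a subgraph. An interval decomposition of $T$ assigns to each vertex $v$ a nonempty closed integer interval $I(v)$ such that whenever $\max I(u)<\min I(v)$ the arc between $u,v$ is $(u,v)$; its width is $\max_{\alpha\in\mathbb{Z}}|\{v:\alpha\in I(v)\}|$, and $\mathrm{pw}(T)$ is the minimum width. $d_{\mathrm{pw}}$ is a fixed constant such that every tournament not containing a simple digraph $H'$ as a topological minor has pathwidth at most $d_{\mathrm{pw}}\|H'\|$ (such a constant exists by a result of Fomin and Pilipczuk). *)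

theory Defs
  imports Complex_Main
begin

type_synonym 'a digraph = "'a set \<times> ('a \<times> 'a) set"

definition verts :: "'a digraph \<Rightarrow> 'a set" where "verts G = fst G"
definition arcs :: "'a digraph \<Rightarrow> ('a \<times> 'a) set" where "arcs G = snd G"

definition simple_digraph :: "'a digraph \<Rightarrow> bool" where
  "simple_digraph G \<longleftrightarrow> finite (verts G) \<and> arcs G \<subseteq> verts G \<times> verts G
     \<and> (\<forall>v. (v, v) \<notin> arcs G)"

definition tournament :: "'a digraph \<Rightarrow> bool" where
  "tournament T \<longleftrightarrow> simple_digraph T \<and>
     (\<forall>u\<in>verts T. \<forall>v\<in>verts T. u \<noteq> v \<longrightarrow> ((u, v) \<in> arcs T \<longleftrightarrow> (v, u) \<notin> arcs T))"

definition strongly_connected :: "'a digraph \<Rightarrow> bool" where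
  "strongly_connected G \<longleftrightarrow> (\<forall>u\<in>verts G. \<forall>v\<in>verts G. (u, v) \<in> (arcs G)\<^sup>*)"

definition gsize :: "'a digraph \<Rightarrow> nat" where
  "gsize G = card (verts G) + card (arcs G)"

definition is_dpath :: "'a digraph \<Rightarrow> 'a list \<Rightarrow> bool" where
  "is_dpath G p \<longleftrightarrow> length p \<ge> 2 \<and> distinct p \<and> set p \<subseteq> verts G \<and>
     (\<forall>i. Suc i < length p \<longrightarrow> (p ! i, p ! Suc i) \<in> arcs G)"

definition path_arcs :: "'a list \<Rightarrow> ('a \<times> 'a) set" where
  "path_arcs p = {(p ! i, p ! Suc i) | i. Suc i < length p}"

definition inner_verts :: "'a list \<Rightarrow> 'a set" where
  "inner_verts p = set (butlast (tl p))"

definition tm_model :: "'a digraph \<Rightarrow> 'b digraph \<Rightarrow> ('b \<Rightarrow> 'a) \<Rightarrow> ('b \<times> 'b \<Rightarrow> 'a list) \<Rightarrow> bool" where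
  "tm_model G H \<phi> P \<longleftrightarrow>
     inj_on \<phi> (verts H) \<and> \<phi> ` verts H \<subseteq> verts G \<and>
     (\<forall>a\<in>arcs H. is_dpath G (P a) \<and> hd (P a) = \<phi> (fst a) \<and> last (P a) = \<phi> (snd a)
                  \<and> inner_verts (P a) \<inter> \<phi> ` verts H = {}) \<and>
     (\<forall>a\<in>arcs H. \<forall>b\<in>arcs H. a \<noteq> b \<longrightarrow>
         inner_verts (P a) \<inter> inner_verts (P b) = {} \<and> path_arcs (P a) \<inter> path_arcs (P b) = {})"

definition tm_verts :: "'b digraph \<Rightarrow> ('b \<Rightarrow> 'a) \<Rightarrow> ('b \<times> 'b \<Rightarrow> 'a list) \<Rightarrow> 'a set" where
  "tm_verts H \<phi> P = \<phi> ` verts H \<union> (\<Union>a\<in>arcs H. set (P a))"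

definition contains_tm :: "'a digraph \<Rightarrow> 'b digraph \<Rightarrow> bool" where
  "contains_tm G H \<longleftrightarrow> (\<exists>\<phi> P. tm_model G H \<phi> P)"

definition contains_k_disjoint_tm :: "nat \<Rightarrow> 'a digraph \<Rightarrow> 'b digraph \<Rightarrow> bool" where
  "contains_k_disjoint_tm k G H \<longleftrightarrow>
     (\<exists>\<phi> P. (\<forall>i<k. tm_model G H (\<phi> i) (P i)) \<and>
        (\<forall>i<k. \<forall>j<k. i \<noteq> j \<longrightarrow> tm_verts H (\<phi> i) (P i) \<inter> tm_verts H (\<phi> j) (P j) = {}))"

definition del_verts :: "'a digraph \<Rightarrow> 'a set \<Rightarrow> 'a digraph" where
  "del_verts G X = (verts G - X, arcs G \<inter> ((verts G - X) \<times> (verts G - X)))"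

definition interval_decomp :: "'a digraph \<Rightarrow> ('a \<Rightarrow> int) \<Rightarrow> ('a \<Rightarrow> int) \<Rightarrow> bool" where
  "interval_decomp T l r \<longleftrightarrow> (\<forall>v\<in>verts T. l v \<le> r v) \<and>
     (\<forall>u\<in>verts T. \<forall>v\<in>verts T. r u < l v \<longrightarrow> (u, v) \<in> arcs T)"

definition decomp_width :: "'a digraph \<Rightarrow> ('a \<Rightarrow> int) \<Rightarrow> ('a \<Rightarrow> int) \<Rightarrow> nat" where
  "decomp_width T l r = Max (range (\<lambda>\<alpha>::int. card {v\<in>verts T. l v \<le> \<alpha> \<and> \<alpha> \<le> r v}))"

definition pathwidth :: "'a digraph \<Rightarrow> nat" where
  "pathwidth T = (LEAST w. \<exists>l r. interval_decomp T l r \<and> decomp_width T l r = w)"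

text \<open>d is an admissible value of the constant d_pw (Fomin--Pilipczuk): every tournament not
  containing a simple digraph H' as a topological minor has pathwidth at most d * \<parallel>H'\<parallel>.
  Finite digraphs are represented up to isomorphism on vertex type nat.\<close>
definition dpw_constant :: "real \<Rightarrow> bool" where
  "dpw_constant d \<longleftrightarrow> (\<forall>(T::nat digraph) (H'::nat digraph).
      tournament T \<longrightarrow> simple_digraph H' \<longrightarrow> \<not> contains_tm T H' \<longrightarrow>
      real (pathwidth T) \<le> d * real (gsize H'))"

end

theory Submission
  imports Defs
begin

(* Induction on k, halving at each step. Let S be a set of vertices of T that carries no k
   disjoint copies of H. If it carries no floor(k/2) copies, recurse on floor(k/2). Otherwise
   T[S] does not contain the disjoint union of k copies of H as a topological minor, so by the
   Fomin-Pilipczuk bound it has an interval decomposition of width at most d k ||H||. Sweep a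
   point alpha through it and stop as soon as the vertices whose intervals end by alpha carry
   floor(k/2) disjoint copies. Then the vertices whose intervals end before alpha carry fewer
   than floor(k/2) copies, those whose intervals start after alpha carry fewer than ceil(k/2),
   and the bag at alpha has at most d k ||H|| vertices. All arcs between the first and the last
   group point forward, so no strongly connected copy of H meets both; hitting sets for the two
   groups together with the bag hit every copy inside S. The recurrence
   f(k) <= f(floor(k/2)) + f(ceil(k/2)) + d ||H|| k is solved by f(k) = 2 d ||H|| k log k. *)

section \<open>Topological minor models\<close>

lemma is_dpath_set:
  assumes "is_dpath G p"
  shows "set p = inner_verts p \<union> {hd p, last p}"
proof -
  have "length p \<ge> 2" using assms by (simp add: is_dpath_def)
  then obtain x y q where p: "p = x # y # q"
    by (auto simp: numeral_2_eq_2 Suc_le_length_iff)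
  obtain ms z where "y # q = ms @ [z]" by (cases "y # q" rule: rev_cases) auto
  with p show ?thesis by (auto simp: inner_verts_def)
qed

lemma inner_verts_subset: "inner_verts p \<subseteq> set p"
  unfolding inner_verts_def by (cases p) (auto dest: in_set_butlastD)

lemma path_arcs_subset: "path_arcs p \<subseteq> set p \<times> set p"
  unfolding path_arcs_def by auto

lemma inner_verts_map: "inner_verts (map h p) = h ` inner_verts p"
  unfolding inner_verts_def by (simp add: map_tl[symmetric] map_butlast[symmetric])

lemma path_arcs_map: "path_arcs (map h p) = map_prod h h ` path_arcs p"
proof -
  have "path_arcs q = (\<lambda>i. (q ! i, q ! Suc i)) ` {i. Suc i < length q}" for q :: "'c list"
    unfolding path_arcs_def by blast
  from this[of "map h p"] this[of p] show ?thesis by (simp add: image_image)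
qed

lemma tm_modelI:
  assumes "inj_on \<phi> (verts H)" "\<phi> ` verts H \<subseteq> verts G"
    and "\<And>a. a \<in> arcs H \<Longrightarrow> is_dpath G (P a)"
    and "\<And>a. a \<in> arcs H \<Longrightarrow> hd (P a) = \<phi> (fst a)"
    and "\<And>a. a \<in> arcs H \<Longrightarrow> last (P a) = \<phi> (snd a)"
    and "\<And>a. a \<in> arcs H \<Longrightarrow> inner_verts (P a) \<inter> \<phi> ` verts H = {}"
    and "\<And>a b. a \<in> arcs H \<Longrightarrow> b \<in> arcs H \<Longrightarrow> a \<noteq> b \<Longrightarrow>
           inner_verts (P a) \<inter> inner_verts (P b) = {}"
    and "\<And>a b. a \<in> arcs H \<Longrightarrow> b \<in> arcs H \<Longrightarrow> a \<noteq> b \<Longrightarrow>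
           path_arcs (P a) \<inter> path_arcs (P b) = {}"
  shows "tm_model G H \<phi> P"
  using assms unfolding tm_model_def by simp

lemma tm_modelD:
  assumes "tm_model G H \<phi> P"
  shows "inj_on \<phi> (verts H)" "\<phi> ` verts H \<subseteq> verts G"
  using assms unfolding tm_model_def by simp_all

lemma tm_model_arcD:
  assumes "tm_model G H \<phi> P" "a \<in> arcs H"
  shows "is_dpath G (P a)" "hd (P a) = \<phi> (fst a)" "last (P a) = \<phi> (snd a)"
    "inner_verts (P a) \<inter> \<phi> ` verts H = {}"
  using assms unfolding tm_model_def by simp_all

lemma tm_model_arc_pairD:
  assumes "tm_model G H \<phi> P" "a \<in> arcs H" "b \<in> arcs H" "a \<noteq> b"
  shows "inner_verts (P a) \<inter> inner_verts (P b) = {}" "path_arcs (P a) \<inter> path_arcs (P b) = {}"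
  using assms unfolding tm_model_def by simp_all

lemma tm_verts_subset:
  assumes "tm_model G H \<phi> P"
  shows "tm_verts H \<phi> P \<subseteq> verts G"
proof -
  have "set (P a) \<subseteq> verts G" if "a \<in> arcs H" for a
    using tm_model_arcD(1)[OF assms that] unfolding is_dpath_def by blast
  then show ?thesis using tm_modelD(2)[OF assms] unfolding tm_verts_def by blast
qed

lemma tm_verts_eq_inner:
  assumes "tm_model G H \<phi> P" and "arcs H \<subseteq> verts H \<times> verts H"
  shows "tm_verts H \<phi> P = \<phi> ` verts H \<union> (\<Union>a\<in>arcs H. inner_verts (P a))"
proof -
  have "set (P a) \<subseteq> \<phi> ` verts H \<union> inner_verts (P a)" if "a \<in> arcs H" for a
  proof -
    have "fst a \<in> verts H" "snd a \<in> verts H" using assms(2) that by auto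
    then show ?thesis
      using is_dpath_set[OF tm_model_arcD(1)[OF assms(1) that]] tm_model_arcD(2,3)[OF assms(1) that]
      by auto
  qed
  then have "(\<Union>a\<in>arcs H. set (P a)) \<subseteq> \<phi> ` verts H \<union> (\<Union>a\<in>arcs H. inner_verts (P a))"
    by blast
  moreover have "(\<Union>a\<in>arcs H. inner_verts (P a)) \<subseteq> (\<Union>a\<in>arcs H. set (P a))"
    using inner_verts_subset by (rule UN_mono[OF subset_refl])
  ultimately show ?thesis
    unfolding tm_verts_def by blast
qed

lemma tm_model_parts_disjoint:
  assumes "tm_model G K \<phi> P"
    and "V\<^sub>1 \<subseteq> verts K" "V\<^sub>2 \<subseteq> verts K" "V\<^sub>1 \<inter> V\<^sub>2 = {}"
    and "E\<^sub>1 \<subseteq> arcs K" "E\<^sub>2 \<subseteq> arcs K" "E\<^sub>1 \<inter> E\<^sub>2 = {}"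
  shows "(\<phi> ` V\<^sub>1 \<union> (\<Union>a\<in>E\<^sub>1. inner_verts (P a))) \<inter> (\<phi> ` V\<^sub>2 \<union> (\<Union>a\<in>E\<^sub>2. inner_verts (P a))) = {}"
proof -
  have branch: "inner_verts (P a) \<inter> \<phi> ` verts K = {}" if "a \<in> arcs K" for a
    using tm_model_arcD(4)[OF assms(1) that] .
  have "\<phi> ` V\<^sub>1 \<inter> \<phi> ` V\<^sub>2 = {}"
    using inj_on_image_Int[OF tm_modelD(1)[OF assms(1)] assms(2,3)] assms(4) by simp
  moreover have "\<phi> ` V\<^sub>1 \<inter> (\<Union>a\<in>E\<^sub>2. inner_verts (P a)) = {}"
    using branch assms(2,6) by blast
  moreover have "(\<Union>a\<in>E\<^sub>1. inner_verts (P a)) \<inter> \<phi> ` V\<^sub>2 = {}"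
    using branch assms(3,5) by blast
  moreover have "(\<Union>a\<in>E\<^sub>1. inner_verts (P a)) \<inter> (\<Union>b\<in>E\<^sub>2. inner_verts (P b)) = {}"
    using tm_model_arc_pairD(1)[OF assms(1)] assms(5-7) by blast
  ultimately show ?thesis by (simp add: Int_Un_distrib Int_Un_distrib2)
qed

lemma verts_del_verts [simp]: "verts (del_verts G Y) = verts G - Y"
  by (simp add: del_verts_def verts_def)

lemma arcs_del_verts [simp]: "arcs (del_verts G Y) = arcs G \<inter> (verts G - Y) \<times> (verts G - Y)"
  by (simp add: del_verts_def arcs_def)

lemma is_dpath_del_verts:
  "is_dpath (del_verts G Y) p \<longleftrightarrow> is_dpath G p \<and> set p \<subseteq> verts G - Y"
proof -
  have "(p ! i, p ! Suc i) \<in> (verts G - Y) \<times> (verts G - Y)"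
    if "set p \<subseteq> verts G - Y" "Suc i < length p" for i
  proof -
    have "p ! i \<in> set p" "p ! Suc i \<in> set p" using that(2) by simp_all
    then show ?thesis using that(1) by blast
  qed
  then show ?thesis unfolding is_dpath_def by auto
qed

lemma tm_model_del_verts:
  "tm_model (del_verts G Y) H \<phi> P \<longleftrightarrow> tm_model G H \<phi> P \<and> tm_verts H \<phi> P \<subseteq> verts G - Y"
proof
  assume m: "tm_model (del_verts G Y) H \<phi> P"
  then show "tm_model G H \<phi> P \<and> tm_verts H \<phi> P \<subseteq> verts G - Y"
    using tm_verts_subset[OF m] unfolding tm_model_def is_dpath_del_verts by auto
next
  assume "tm_model G H \<phi> P \<and> tm_verts H \<phi> P \<subseteq> verts G - Y"
  then show "tm_model (del_verts G Y) H \<phi> P"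
    unfolding tm_model_def tm_verts_def is_dpath_del_verts by auto
qed

lemma tournament_arc_iff:
  assumes "tournament G" "u \<in> verts G" "v \<in> verts G" "u \<noteq> v"
  shows "(u, v) \<in> arcs G \<longleftrightarrow> (v, u) \<notin> arcs G"
  using assms unfolding tournament_def by blast

lemma tournament_del_verts:
  assumes "tournament T"
  shows "tournament (del_verts T Y)"
proof -
  have "simple_digraph T" using assms unfolding tournament_def by blast
  then have "simple_digraph (del_verts T Y)" unfolding simple_digraph_def by auto
  moreover have "(u, v) \<in> arcs (del_verts T Y) \<longleftrightarrow> (v, u) \<notin> arcs (del_verts T Y)"
    if "u \<in> verts (del_verts T Y)" "v \<in> verts (del_verts T Y)" "u \<noteq> v" for u v
    using tournament_arc_iff[OF assms, of u v] that by auto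
  ultimately show ?thesis unfolding tournament_def by blast
qed

section \<open>Relabelling vertices and disjoint copies\<close>

lemma digraph_eqI: "verts G = verts G' \<Longrightarrow> arcs G = arcs G' \<Longrightarrow> G = G'"
  by (simp add: verts_def arcs_def prod_eq_iff)

definition digraph_image :: "('a \<Rightarrow> 'c) \<Rightarrow> 'a digraph \<Rightarrow> 'c digraph" where
  "digraph_image f G = (f ` verts G, map_prod f f ` arcs G)"

lemma verts_digraph_image [simp]: "verts (digraph_image f G) = f ` verts G"
  by (simp add: digraph_image_def verts_def)

lemma arcs_digraph_image [simp]: "arcs (digraph_image f G) = map_prod f f ` arcs G"
  by (simp add: digraph_image_def arcs_def)

lemma arc_digraph_image_iff:
  assumes "inj_on f (verts G)" "arcs G \<subseteq> verts G \<times> verts G" "u \<in> verts G" "v \<in> verts G"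
  shows "(f u, f v) \<in> arcs (digraph_image f G) \<longleftrightarrow> (u, v) \<in> arcs G"
  using inj_on_image_mem_iff[OF map_prod_inj_on[OF assms(1,1)], of "(u, v)" "arcs G"] assms(2-4)
  by simp

lemma simple_digraph_image:
  assumes "simple_digraph G" "inj_on f (verts G)"
  shows "simple_digraph (digraph_image f G)"
  using assms unfolding simple_digraph_def by (auto dest: inj_onD)

lemma tournament_digraph_image:
  assumes "tournament G" "inj_on f (verts G)"
  shows "tournament (digraph_image f G)"
proof -
  have simple: "simple_digraph G" using assms(1) unfolding tournament_def by blast
  have arcs: "arcs G \<subseteq> verts G \<times> verts G" using simple by (simp add: simple_digraph_def)
  have "(x, y) \<in> arcs (digraph_image f G) \<longleftrightarrow> (y, x) \<notin> arcs (digraph_image f G)"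
    if xy: "x \<in> verts (digraph_image f G)" "y \<in> verts (digraph_image f G)" "x \<noteq> y" for x y
  proof -
    obtain u v where "u \<in> verts G" "v \<in> verts G" "x = f u" "y = f v" using xy(1,2) by auto
    then show ?thesis
      using tournament_arc_iff[OF assms(1), of u v] xy(3) arc_digraph_image_iff[OF assms(2) arcs]
      by auto
  qed
  then show ?thesis
    using simple_digraph_image[OF simple assms(2)] unfolding tournament_def by blast
qed

lemma gsize_digraph_image:
  assumes "inj_on f (verts G)" "arcs G \<subseteq> verts G \<times> verts G"
  shows "gsize (digraph_image f G) = gsize G"
proof -
  have "inj_on (map_prod f f) (arcs G)"
    using map_prod_inj_on[OF assms(1,1)] assms(2) by (rule inj_on_subset)
  then show ?thesis using assms(1) by (simp add: gsize_def card_image)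
qed

lemma digraph_image_inv_into:
  assumes "inj_on f (verts G)" "arcs G \<subseteq> verts G \<times> verts G"
  shows "digraph_image (inv_into (verts G) f) (digraph_image f G) = G"
proof (rule digraph_eqI)
  show "verts (digraph_image (inv_into (verts G) f) (digraph_image f G)) = verts G"
    using assms(1) by simp
  have "map_prod (inv_into (verts G) f) (inv_into (verts G) f) (map_prod f f a) = a"
    if "a \<in> arcs G" for a
    using that assms by (auto simp: map_prod_def split: prod.split)
  then show "arcs (digraph_image (inv_into (verts G) f) (digraph_image f G)) = arcs G"
    by (simp add: image_image cong: image_cong)
qed

lemma is_dpath_digraph_image:
  assumes "is_dpath G p" "inj_on h (verts G)"
  shows "is_dpath (digraph_image h G) (map h p)"
proof -
  have "(p ! i, p ! Suc i) \<in> arcs G" if "Suc i < length p" for i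
    using assms(1) that unfolding is_dpath_def by blast
  then have "(map h p ! i, map h p ! Suc i) \<in> map_prod h h ` arcs G" if "Suc i < length p" for i
    using that by force
  then show ?thesis
    using assms inj_on_subset[OF assms(2)] unfolding is_dpath_def by (auto simp: distinct_map)
qed

lemma tm_model_digraph_image:
  assumes m: "tm_model G H \<phi> P" and h: "inj_on h (verts G)"
  shows "tm_model (digraph_image h G) H (h \<circ> \<phi>) (map h \<circ> P)"
proof -
  have branch: "\<phi> ` verts H \<subseteq> verts G" using tm_modelD(2)[OF m] .
  have path: "set (P a) \<subseteq> verts G" if "a \<in> arcs H" for a
    using tm_model_arcD(1)[OF m that] unfolding is_dpath_def by blast
  have inner: "inner_verts (P a) \<subseteq> verts G" if "a \<in> arcs H" for a
    using inner_verts_subset path[OF that] by (rule order_trans)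
  have path_arcs: "path_arcs (P a) \<subseteq> verts G \<times> verts G" if "a \<in> arcs H" for a
    using path_arcs_subset path[OF that] by blast
  have nonempty: "P a \<noteq> []" if "a \<in> arcs H" for a
    using tm_model_arcD(1)[OF m that] unfolding is_dpath_def by auto
  show ?thesis
  proof (rule tm_modelI)
    show "inj_on (h \<circ> \<phi>) (verts H)"
      using tm_modelD(1)[OF m] inj_on_subset[OF h branch] by (rule comp_inj_on)
    show "(h \<circ> \<phi>) ` verts H \<subseteq> verts (digraph_image h G)"
      using branch by (auto simp: image_comp[symmetric])
  next
    fix a assume "a \<in> arcs H"
    then show "is_dpath (digraph_image h G) ((map h \<circ> P) a)"
      using is_dpath_digraph_image[OF tm_model_arcD(1)[OF m] h] by simp
  next
    fix a assume "a \<in> arcs H"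
    then show "hd ((map h \<circ> P) a) = (h \<circ> \<phi>) (fst a)"
      using tm_model_arcD(2)[OF m] nonempty by (simp add: hd_map)
  next
    fix a assume "a \<in> arcs H"
    then show "last ((map h \<circ> P) a) = (h \<circ> \<phi>) (snd a)"
      using tm_model_arcD(3)[OF m] nonempty by (simp add: last_map)
  next
    fix a assume a: "a \<in> arcs H"
    show "inner_verts ((map h \<circ> P) a) \<inter> (h \<circ> \<phi>) ` verts H = {}"
      using tm_model_arcD(4)[OF m a] inj_on_image_Int[OF h inner[OF a] branch]
      by (simp add: inner_verts_map image_comp)
  next
    fix a b assume ab: "a \<in> arcs H" "b \<in> arcs H" "a \<noteq> b"
    show "inner_verts ((map h \<circ> P) a) \<inter> inner_verts ((map h \<circ> P) b) = {}"
      using tm_model_arc_pairD(1)[OF m ab] inj_on_image_Int[OF h inner[OF ab(1)] inner[OF ab(2)]]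
      by (simp add: inner_verts_map)
  next
    fix a b assume ab: "a \<in> arcs H" "b \<in> arcs H" "a \<noteq> b"
    show "path_arcs ((map h \<circ> P) a) \<inter> path_arcs ((map h \<circ> P) b) = {}"
      using tm_model_arc_pairD(2)[OF m ab]
        inj_on_image_Int[OF map_prod_inj_on[OF h h] path_arcs[OF ab(1)] path_arcs[OF ab(2)]]
      by (simp add: path_arcs_map)
  qed
qed

lemma contains_tm_digraph_image_iff:
  assumes "inj_on f (verts G)" "arcs G \<subseteq> verts G \<times> verts G"
  shows "contains_tm (digraph_image f G) H \<longleftrightarrow> contains_tm G H"
proof
  assume "contains_tm (digraph_image f G) H"
  moreover have "inj_on (inv_into (verts G) f) (verts (digraph_image f G))"
    by (simp add: inj_on_inv_into)
  ultimately have "contains_tm (digraph_image (inv_into (verts G) f) (digraph_image f G)) H"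
    unfolding contains_tm_def using tm_model_digraph_image by blast
  then show "contains_tm G H" using digraph_image_inv_into[OF assms] by simp
next
  assume "contains_tm G H"
  then show "contains_tm (digraph_image f G) H"
    unfolding contains_tm_def using tm_model_digraph_image[OF _ assms(1)] by blast
qed

lemma tm_model_comp_embedding:
  assumes m: "tm_model G K \<phi> P"
    and h: "inj_on h (verts J)" "h ` verts J \<subseteq> verts K" "map_prod h h ` arcs J \<subseteq> arcs K"
    and J: "arcs J \<subseteq> verts J \<times> verts J"
  shows "tm_model G J (\<phi> \<circ> h) (P \<circ> map_prod h h)"
proof -
  have arc: "map_prod h h a \<in> arcs K" if "a \<in> arcs J" for a
    using h(3) that by blast
  have arc_inj: "map_prod h h a \<noteq> map_prod h h b" if "a \<in> arcs J" "b \<in> arcs J" "a \<noteq> b" for a b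
    using inj_onD[OF map_prod_inj_on[OF h(1,1)]] that J by blast
  show ?thesis
  proof (rule tm_modelI)
    show "inj_on (\<phi> \<circ> h) (verts J)"
      using h(1) inj_on_subset[OF tm_modelD(1)[OF m] h(2)] by (rule comp_inj_on)
    show "(\<phi> \<circ> h) ` verts J \<subseteq> verts G"
      using tm_modelD(2)[OF m] h(2) by (auto simp: image_comp[symmetric])
  next
    fix a assume "a \<in> arcs J"
    from tm_model_arcD[OF m arc[OF this]] h(2)
    show "is_dpath G ((P \<circ> map_prod h h) a)" "hd ((P \<circ> map_prod h h) a) = (\<phi> \<circ> h) (fst a)"
      "last ((P \<circ> map_prod h h) a) = (\<phi> \<circ> h) (snd a)"
      "inner_verts ((P \<circ> map_prod h h) a) \<inter> (\<phi> \<circ> h) ` verts J = {}"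
      by (cases a; auto)+
  next
    fix a b assume "a \<in> arcs J" "b \<in> arcs J" "a \<noteq> b"
    from tm_model_arc_pairD[OF m arc[OF this(1)] arc[OF this(2)] arc_inj[OF this]]
    show "inner_verts ((P \<circ> map_prod h h) a) \<inter> inner_verts ((P \<circ> map_prod h h) b) = {}"
      "path_arcs ((P \<circ> map_prod h h) a) \<inter> path_arcs ((P \<circ> map_prod h h) b) = {}"
      by simp_all
  qed
qed

lemma contains_tm_of_digraph_image:
  assumes "contains_tm G (digraph_image g H)" "inj_on g (verts H)" "arcs H \<subseteq> verts H \<times> verts H"
  shows "contains_tm G H"
proof -
  obtain \<phi> P where "tm_model G (digraph_image g H) \<phi> P"
    using assms(1) unfolding contains_tm_def by blast
  from tm_model_comp_embedding[OF this assms(2) _ _ assms(3)] show ?thesis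
    unfolding contains_tm_def by auto
qed

definition disjoint_copies :: "nat \<Rightarrow> 'b digraph \<Rightarrow> (nat \<times> 'b) digraph" where
  "disjoint_copies j H = ({..<j} \<times> verts H, (\<lambda>(i, u, v). ((i, u), (i, v))) ` ({..<j} \<times> arcs H))"

lemma verts_disjoint_copies [simp]: "verts (disjoint_copies j H) = {..<j} \<times> verts H"
  by (simp add: disjoint_copies_def verts_def)

lemma arcs_disjoint_copies [simp]:
  "arcs (disjoint_copies j H) = (\<lambda>(i, u, v). ((i, u), (i, v))) ` ({..<j} \<times> arcs H)"
  by (simp add: disjoint_copies_def arcs_def)

lemma simple_digraph_disjoint_copies:
  assumes "simple_digraph H"
  shows "simple_digraph (disjoint_copies j H)"
  using assms unfolding simple_digraph_def by auto

lemma gsize_disjoint_copies: "gsize (disjoint_copies j H) = j * gsize H"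
proof -
  have "inj_on (\<lambda>(i, u, v). ((i, u), (i, v))) ({..<j} \<times> arcs H)"
    by (auto simp: inj_on_def)
  then show ?thesis
    by (simp add: gsize_def card_image card_cartesian_product algebra_simps)
qed

lemma contains_k_disjoint_tm_if_contains_disjoint_copies:
  assumes "contains_tm G (disjoint_copies j H)" and H: "arcs H \<subseteq> verts H \<times> verts H"
  shows "contains_k_disjoint_tm j G H"
proof -
  obtain \<phi> P where m: "tm_model G (disjoint_copies j H) \<phi> P"
    using assms(1) unfolding contains_tm_def by blast
  define V where "V i = Pair i ` verts H" for i :: nat
  define E where "E i = map_prod (Pair i) (Pair i) ` arcs H" for i :: nat
  have V: "V i \<subseteq> verts (disjoint_copies j H)" and E: "E i \<subseteq> arcs (disjoint_copies j H)"
    if "i < j" for i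
    using that unfolding V_def E_def by force+
  have copy: "tm_model G H (\<phi> \<circ> Pair i) (P \<circ> map_prod (Pair i) (Pair i))" if "i < j" for i
    using tm_model_comp_embedding[OF m _ V[OF that, unfolded V_def] E[OF that, unfolded E_def] H]
    by (simp add: inj_on_def)
  have copy_verts: "tm_verts H (\<phi> \<circ> Pair i) (P \<circ> map_prod (Pair i) (Pair i))
      = \<phi> ` V i \<union> (\<Union>a\<in>E i. inner_verts (P a))" if "i < j" for i
    using tm_verts_eq_inner[OF copy[OF that] H] unfolding V_def E_def by (simp add: image_comp)
  have "V i \<inter> V i' = {}" "E i \<inter> E i' = {}" if "i \<noteq> i'" for i i'
    using that unfolding V_def E_def by auto
  then have "tm_verts H (\<phi> \<circ> Pair i) (P \<circ> map_prod (Pair i) (Pair i))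
      \<inter> tm_verts H (\<phi> \<circ> Pair i') (P \<circ> map_prod (Pair i') (Pair i')) = {}"
    if "i < j" "i' < j" "i \<noteq> i'" for i i'
    using tm_model_parts_disjoint[OF m V[OF that(1)] V[OF that(2)] _ E[OF that(1)] E[OF that(2)]]
      copy_verts that by simp
  then show ?thesis
    unfolding contains_k_disjoint_tm_def using copy
    by (intro exI[of _ "\<lambda>i. \<phi> \<circ> Pair i"] exI[of _ "\<lambda>i. P \<circ> map_prod (Pair i) (Pair i)"]) auto
qed

section \<open>Interval decompositions\<close>

lemma pathwidth_attained: "\<exists>l r. interval_decomp G l r \<and> decomp_width G l r = pathwidth G"
proof -
  have "interval_decomp G (\<lambda>_. 0) (\<lambda>_. 0)" by (simp add: interval_decomp_def)
  then have "\<exists>w l r. interval_decomp G l r \<and> decomp_width G l r = w" by blast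
  from LeastI_ex[OF this] show ?thesis unfolding pathwidth_def by blast
qed

lemma interval_decomp_digraph_image:
  assumes f: "inj_on f (verts G)" "arcs G \<subseteq> verts G \<times> verts G"
    and dec: "interval_decomp (digraph_image f G) l r"
  shows "interval_decomp G (l \<circ> f) (r \<circ> f)"
    and "decomp_width G (l \<circ> f) (r \<circ> f) = decomp_width (digraph_image f G) l r"
proof -
  show "interval_decomp G (l \<circ> f) (r \<circ> f)"
    using dec arc_digraph_image_iff[OF f] unfolding interval_decomp_def by auto
  have "card {v \<in> verts G. (l \<circ> f) v \<le> \<alpha> \<and> \<alpha> \<le> (r \<circ> f) v}
      = card {v \<in> verts (digraph_image f G). l v \<le> \<alpha> \<and> \<alpha> \<le> r v}" for \<alpha>
  proof -
    have "{v \<in> verts (digraph_image f G). l v \<le> \<alpha> \<and> \<alpha> \<le> r v}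
        = f ` {v \<in> verts G. (l \<circ> f) v \<le> \<alpha> \<and> \<alpha> \<le> (r \<circ> f) v}"
      by auto
    moreover have "inj_on f {v \<in> verts G. (l \<circ> f) v \<le> \<alpha> \<and> \<alpha> \<le> (r \<circ> f) v}"
      using f(1) by (rule inj_on_subset) blast
    ultimately show ?thesis by (simp add: card_image)
  qed
  then show "decomp_width G (l \<circ> f) (r \<circ> f) = decomp_width (digraph_image f G) l r"
    unfolding decomp_width_def by presburger
qed

lemma dpw_constant_interval_decomp:
  fixes G :: "'a digraph" and H :: "'b digraph"
  assumes dpw: "dpw_constant d" and G: "tournament G" and H: "simple_digraph H"
    and no_tm: "\<not> contains_tm G H"
  shows "\<exists>l r. interval_decomp G l r \<and> real (decomp_width G l r) \<le> d * real (gsize H)"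
proof -
  have G_simple: "finite (verts G)" "arcs G \<subseteq> verts G \<times> verts G"
    and H_simple: "finite (verts H)" "arcs H \<subseteq> verts H \<times> verts H"
    using G H unfolding tournament_def simple_digraph_def by blast+
  \<comment> \<open>dpw_constant only speaks about digraphs on nat, so relabel both digraphs\<close>
  obtain f :: "'a \<Rightarrow> nat" where f: "inj_on f (verts G)"
    using finite_imp_inj_to_nat_seg[OF G_simple(1)] by blast
  obtain g :: "'b \<Rightarrow> nat" where g: "inj_on g (verts H)"
    using finite_imp_inj_to_nat_seg[OF H_simple(1)] by blast
  have "\<not> contains_tm (digraph_image f G) (digraph_image g H)"
    using no_tm contains_tm_digraph_image_iff[OF f G_simple(2)]
      contains_tm_of_digraph_image[OF _ g H_simple(2)] by blast
  then have "real (pathwidth (digraph_image f G)) \<le> d * real (gsize (digraph_image g H))"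
    using dpw tournament_digraph_image[OF G f] simple_digraph_image[OF H g]
    unfolding dpw_constant_def by blast
  then have "real (pathwidth (digraph_image f G)) \<le> d * real (gsize H)"
    by (simp only: gsize_digraph_image[OF g H_simple(2)])
  moreover obtain l r where "interval_decomp (digraph_image f G) l r"
    and "decomp_width (digraph_image f G) l r = pathwidth (digraph_image f G)"
    using pathwidth_attained by blast
  ultimately show ?thesis
    using interval_decomp_digraph_image[OF f G_simple(2)] by metis
qed

lemma interval_decomp_if_not_contains_k_disjoint_tm:
  assumes "dpw_constant d" "tournament G" "simple_digraph H" "\<not> contains_k_disjoint_tm j G H"
  shows "\<exists>l r. interval_decomp G l r \<and> real (decomp_width G l r) \<le> d * real j * real (gsize H)"
proof -
  have "\<not> contains_tm G (disjoint_copies j H)"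
    using assms(3,4) contains_k_disjoint_tm_if_contains_disjoint_copies
    unfolding simple_digraph_def by blast
  from dpw_constant_interval_decomp[OF assms(1,2) simple_digraph_disjoint_copies[OF assms(3)] this]
  show ?thesis by (simp add: gsize_disjoint_copies mult.assoc)
qed

lemma card_bag_le_decomp_width:
  assumes "finite (verts G)"
  shows "card {v \<in> verts G. l v \<le> \<alpha> \<and> \<alpha> \<le> r v} \<le> decomp_width G l r"
proof -
  have "range (\<lambda>\<alpha>. card {v \<in> verts G. l v \<le> \<alpha> \<and> \<alpha> \<le> r v}) \<subseteq> {..card (verts G)}"
    using assms by (auto intro!: card_mono)
  then show ?thesis
    unfolding decomp_width_def by (auto intro: Max_ge finite_subset)
qed

section \<open>Packings and one-way cuts\<close>

definition tm_packing :: "'a digraph \<Rightarrow> 'b digraph \<Rightarrow> 'a set \<Rightarrow> nat \<Rightarrow> bool" where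
  "tm_packing G H S k \<longleftrightarrow> (\<exists>\<phi> P.
     (\<forall>i<k. tm_model G H (\<phi> i) (P i) \<and> tm_verts H (\<phi> i) (P i) \<subseteq> S) \<and>
     (\<forall>i<k. \<forall>j<k. i \<noteq> j \<longrightarrow> tm_verts H (\<phi> i) (P i) \<inter> tm_verts H (\<phi> j) (P j) = {}))"

lemma contains_k_disjoint_tm_del_verts_iff:
  "contains_k_disjoint_tm k (del_verts G Y) H \<longleftrightarrow> tm_packing G H (verts G - Y) k"
  unfolding contains_k_disjoint_tm_def tm_packing_def tm_model_del_verts by (rule refl)

lemma contains_k_disjoint_tm_iff_tm_packing:
  "contains_k_disjoint_tm k G H \<longleftrightarrow> tm_packing G H (verts G) k"
proof -
  have "tm_model G H \<phi> P \<and> tm_verts H \<phi> P \<subseteq> verts G \<longleftrightarrow> tm_model G H \<phi> P" for \<phi> P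
    using tm_verts_subset by blast
  then show ?thesis unfolding contains_k_disjoint_tm_def tm_packing_def by (simp only:)
qed

lemma tm_packing_one_iff:
  "tm_packing G H S 1 \<longleftrightarrow> (\<exists>\<phi> P. tm_model G H \<phi> P \<and> tm_verts H \<phi> P \<subseteq> S)"
proof
  assume "tm_packing G H S 1"
  then show "\<exists>\<phi> P. tm_model G H \<phi> P \<and> tm_verts H \<phi> P \<subseteq> S"
    unfolding tm_packing_def by auto
next
  assume "\<exists>\<phi> P. tm_model G H \<phi> P \<and> tm_verts H \<phi> P \<subseteq> S"
  then obtain \<phi> P where "tm_model G H \<phi> P \<and> tm_verts H \<phi> P \<subseteq> S" by blast
  then show "tm_packing G H S 1"
    unfolding tm_packing_def by (intro exI[of _ "\<lambda>_. \<phi>"] exI[of _ "\<lambda>_. P"]) simp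
qed

lemma contains_tm_del_verts_iff:
  "contains_tm (del_verts G Y) H \<longleftrightarrow> tm_packing G H (verts G - Y) 1"
  unfolding tm_packing_one_iff contains_tm_def tm_model_del_verts by (rule refl)

lemma tm_packing_mono:
  assumes "tm_packing G H S k" "S \<subseteq> S'" "k' \<le> k"
  shows "tm_packing G H S' k'"
proof -
  obtain \<phi> P where
    "\<forall>i<k. tm_model G H (\<phi> i) (P i) \<and> tm_verts H (\<phi> i) (P i) \<subseteq> S"
    "\<forall>i<k. \<forall>j<k. i \<noteq> j \<longrightarrow> tm_verts H (\<phi> i) (P i) \<inter> tm_verts H (\<phi> j) (P j) = {}"
    using assms(1) unfolding tm_packing_def by blast
  then show ?thesis
    unfolding tm_packing_def using assms(2) order_less_le_trans[OF _ assms(3)]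
    by (intro exI[of _ \<phi>] exI[of _ P]) blast
qed

lemma not_tm_packing_empty:
  assumes "verts H \<noteq> {}" "k \<ge> 1"
  shows "\<not> tm_packing G H {} k"
proof
  assume "tm_packing G H {} k"
  then obtain \<phi> P where "\<forall>i<k. tm_model G H (\<phi> i) (P i) \<and> tm_verts H (\<phi> i) (P i) \<subseteq> {}"
    unfolding tm_packing_def by blast
  then have "tm_verts H (\<phi> 0) (P 0) = {}" using assms(2) by simp
  then show False using assms(1) unfolding tm_verts_def by simp
qed

lemma tm_packing_empty_pattern:
  assumes "verts H = {}" "arcs H \<subseteq> verts H \<times> verts H"
  shows "tm_packing G H S k"
  using assms unfolding tm_packing_def tm_model_def tm_verts_def by simp

lemma tm_packing_Un:
  assumes "tm_packing G H A a" "tm_packing G H C c" "A \<inter> C = {}"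
  shows "tm_packing G H (A \<union> C) (a + c)"
proof -
  obtain \<phi>\<^sub>1 P\<^sub>1 where
    m1: "\<forall>i<a. tm_model G H (\<phi>\<^sub>1 i) (P\<^sub>1 i) \<and> tm_verts H (\<phi>\<^sub>1 i) (P\<^sub>1 i) \<subseteq> A" and
    d1: "\<forall>i<a. \<forall>j<a. i \<noteq> j \<longrightarrow> tm_verts H (\<phi>\<^sub>1 i) (P\<^sub>1 i) \<inter> tm_verts H (\<phi>\<^sub>1 j) (P\<^sub>1 j) = {}"
    using assms(1) unfolding tm_packing_def by blast
  obtain \<phi>\<^sub>2 P\<^sub>2 where
    m2: "\<forall>i<c. tm_model G H (\<phi>\<^sub>2 i) (P\<^sub>2 i) \<and> tm_verts H (\<phi>\<^sub>2 i) (P\<^sub>2 i) \<subseteq> C" and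
    d2: "\<forall>i<c. \<forall>j<c. i \<noteq> j \<longrightarrow> tm_verts H (\<phi>\<^sub>2 i) (P\<^sub>2 i) \<inter> tm_verts H (\<phi>\<^sub>2 j) (P\<^sub>2 j) = {}"
    using assms(2) unfolding tm_packing_def by blast
  define \<phi> where "\<phi> i = (if i < a then \<phi>\<^sub>1 i else \<phi>\<^sub>2 (i - a))" for i
  define P where "P i = (if i < a then P\<^sub>1 i else P\<^sub>2 (i - a))" for i
  have "i - a < c" if "\<not> i < a" "i < a + c" for i
    using that by linarith
  then have models: "tm_model G H (\<phi> i) (P i)"
    and in_C: "tm_verts H (\<phi> i) (P i) \<subseteq> C" if "\<not> i < a" "i < a + c" for i
    using m2 that unfolding \<phi>_def P_def by simp_all
  have in_A: "tm_model G H (\<phi> i) (P i)" "tm_verts H (\<phi> i) (P i) \<subseteq> A" if "i < a" for i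
    using m1 that unfolding \<phi>_def P_def by simp_all
  have "tm_model G H (\<phi> i) (P i) \<and> tm_verts H (\<phi> i) (P i) \<subseteq> A \<union> C" if "i < a + c" for i
    using models[of i] in_C[of i] in_A[of i] that by (cases "i < a") auto
  moreover have "tm_verts H (\<phi> i) (P i) \<inter> tm_verts H (\<phi> j) (P j) = {}"
    if ij: "i < a + c" "j < a + c" "i \<noteq> j" for i j
  proof -
    consider "i < a" "j < a" | "\<not> i < a" "\<not> j < a" | "i < a" "\<not> j < a" | "\<not> i < a" "j < a"
      by blast
    then show ?thesis
    proof cases
      case 1
      then show ?thesis using d1 1 ij(3) unfolding \<phi>_def P_def by simp
    next
      case 2
      then have "i - a < c" "j - a < c" "i - a \<noteq> j - a" using ij by linarith+
      then show ?thesis using d2 2 unfolding \<phi>_def P_def by simp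
    next
      case 3
      then show ?thesis using in_A(2)[of i] in_C[of j] ij(2) assms(3) by blast
    next
      case 4
      then show ?thesis using in_A(2)[of j] in_C[of i] ij(1) assms(3) by blast
    qed
  qed
  ultimately show ?thesis unfolding tm_packing_def by blast
qed

lemma dpath_nth_mem_forward_closed:
  assumes "is_dpath G p" "set p \<subseteq> A \<union> C" "\<forall>x\<in>C. \<forall>y\<in>A. (x, y) \<notin> arcs G"
    and "p ! i \<in> C" "i \<le> j" "j < length p"
  shows "p ! j \<in> C"
  using assms(5,6)
proof (induction j rule: dec_induct)
  case base
  show ?case by (fact assms(4))
next
  case (step n)
  have "(p ! n, p ! Suc n) \<in> arcs G" using assms(1) step.prems unfolding is_dpath_def by blast
  moreover have "p ! Suc n \<in> A \<union> C" using assms(2) nth_mem[of "Suc n" p] step.prems by blast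
  ultimately show ?case using step.IH step.prems assms(3) by auto
qed

lemma dpath_subset_forward_closed:
  assumes "is_dpath G p" "set p \<subseteq> A \<union> C" "\<forall>x\<in>C. \<forall>y\<in>A. (x, y) \<notin> arcs G" "hd p \<in> C"
  shows "set p \<subseteq> C"
proof
  fix x assume "x \<in> set p"
  then obtain j where "j < length p" "x = p ! j" by (auto simp: in_set_conv_nth)
  moreover have "p ! 0 \<in> C" using assms(1,4) by (cases p) (auto simp: is_dpath_def)
  ultimately show "x \<in> C" using dpath_nth_mem_forward_closed[OF assms(1-3)] by blast
qed

lemma dpath_last_mem_forward_closed:
  assumes "is_dpath G p" "set p \<subseteq> A \<union> C" "\<forall>x\<in>C. \<forall>y\<in>A. (x, y) \<notin> arcs G"
    and "x \<in> set p" "x \<in> C"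
  shows "last p \<in> C"
proof -
  obtain i where "i < length p" "p ! i \<in> C" using assms(4,5) by (auto simp: in_set_conv_nth)
  then have "p ! (length p - 1) \<in> C" using dpath_nth_mem_forward_closed[OF assms(1-3)] by simp
  moreover have "p \<noteq> []" using assms(4) by auto
  ultimately show ?thesis by (simp add: last_conv_nth)
qed

lemma set_path_subset_tm_verts: "a \<in> arcs H \<Longrightarrow> set (P a) \<subseteq> tm_verts H \<phi> P"
  unfolding tm_verts_def by blast

lemma tm_model_reachable_forward_closed:
  assumes m: "tm_model G H \<phi> P" and W: "tm_verts H \<phi> P \<subseteq> A \<union> C"
    and cut: "\<forall>x\<in>C. \<forall>y\<in>A. (x, y) \<notin> arcs G"
    and "(u, v) \<in> (arcs H)\<^sup>*" "\<phi> u \<in> C"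
  shows "\<phi> v \<in> C"
  using assms(4)
proof (induction rule: rtrancl_induct)
  case base
  show ?case by (fact assms(5))
next
  case (step y z)
  have path: "is_dpath G (P (y, z))" using tm_model_arcD(1)[OF m step(2)] .
  moreover have "set (P (y, z)) \<subseteq> A \<union> C"
    using set_path_subset_tm_verts[OF step(2), where P = P and \<phi> = \<phi>] W by blast
  moreover have "hd (P (y, z)) \<in> C" using tm_model_arcD(2)[OF m step(2)] step.IH by simp
  ultimately have "set (P (y, z)) \<subseteq> C" using dpath_subset_forward_closed[OF _ _ cut] by blast
  moreover have "P (y, z) \<noteq> []" using path unfolding is_dpath_def by auto
  ultimately show ?case using tm_model_arcD(3)[OF m step(2)] last_in_set by fastforce
qed

lemma strongly_connected_tm_verts_one_side:
  assumes m: "tm_model G H \<phi> P" and H: "arcs H \<subseteq> verts H \<times> verts H" "strongly_connected H"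
    and W: "tm_verts H \<phi> P \<subseteq> A \<union> C" and cut: "\<forall>x\<in>C. \<forall>y\<in>A. (x, y) \<notin> arcs G"
  shows "tm_verts H \<phi> P \<subseteq> A \<or> tm_verts H \<phi> P \<subseteq> C"
proof -
  have path: "is_dpath G (P a)" "set (P a) \<subseteq> A \<union> C" if "a \<in> arcs H" for a
    using tm_model_arcD(1)[OF m that] set_path_subset_tm_verts[OF that, where P = P and \<phi> = \<phi>] W by auto
  show ?thesis
  proof (cases "\<exists>u\<in>verts H. \<phi> u \<in> C")
    case True
    then obtain u where "u \<in> verts H" "\<phi> u \<in> C" by blast
    then have branch: "\<phi> v \<in> C" if "v \<in> verts H" for v
      using tm_model_reachable_forward_closed[OF m W cut] H(2) that
      unfolding strongly_connected_def by blast
    have "set (P a) \<subseteq> C" if "a \<in> arcs H" for a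
    proof -
      have "fst a \<in> verts H" using H(1) that by auto
      then have "hd (P a) \<in> C" using tm_model_arcD(2)[OF m that] branch by simp
      then show ?thesis using dpath_subset_forward_closed[OF path[OF that] cut] by blast
    qed
    then have "tm_verts H \<phi> P \<subseteq> C" using branch unfolding tm_verts_def by blast
    then show ?thesis ..
  next
    case False
    have "set (P a) \<subseteq> A" if "a \<in> arcs H" for a
    proof -
      have "last (P a) \<notin> C" using tm_model_arcD(3)[OF m that] False H(1) that by auto
      then show ?thesis using dpath_last_mem_forward_closed[OF path[OF that] cut] path(2)[OF that]
        by blast
    qed
    moreover have "\<phi> ` verts H \<subseteq> A" using W False unfolding tm_verts_def by blast
    ultimately have "tm_verts H \<phi> P \<subseteq> A" unfolding tm_verts_def by blast
    then show ?thesis ..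
  qed
qed

lemma not_tm_packing_across_cut:
  assumes H: "arcs H \<subseteq> verts H \<times> verts H" "strongly_connected H"
    and cut: "\<forall>x\<in>C. \<forall>y\<in>A. (x, y) \<notin> arcs G"
    and A: "\<not> tm_packing G H (A - X\<^sub>A) 1" and C: "\<not> tm_packing G H (C - X\<^sub>C) 1"
  shows "\<not> tm_packing G H (A \<union> B \<union> C - (X\<^sub>A \<union> B \<union> X\<^sub>C)) 1"
proof
  assume "tm_packing G H (A \<union> B \<union> C - (X\<^sub>A \<union> B \<union> X\<^sub>C)) 1"
  then obtain \<phi> P where m: "tm_model G H \<phi> P"
    and "tm_verts H \<phi> P \<subseteq> A \<union> B \<union> C - (X\<^sub>A \<union> B \<union> X\<^sub>C)"
    unfolding tm_packing_one_iff by blast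
  then have "tm_verts H \<phi> P \<subseteq> (A - X\<^sub>A) \<union> (C - X\<^sub>C)" by blast
  moreover have "\<forall>x\<in>C - X\<^sub>C. \<forall>y\<in>A - X\<^sub>A. (x, y) \<notin> arcs G" using cut by blast
  ultimately have "tm_verts H \<phi> P \<subseteq> A - X\<^sub>A \<or> tm_verts H \<phi> P \<subseteq> C - X\<^sub>C"
    by (rule strongly_connected_tm_verts_one_side[OF m H])
  then show False using A C m unfolding tm_packing_one_iff by blast
qed

section \<open>The halving recursion\<close>

lemma int_threshold:
  fixes Q :: "int \<Rightarrow> bool"
  assumes "\<not> Q a" "Q b" "a \<le> b"
  obtains \<alpha> where "\<not> Q (\<alpha> - 1)" "Q \<alpha>"
proof -
  have "Q (a + int (nat (b - a)))" using assms(2,3) by simp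
  then obtain n where n: "\<forall>i<n. \<not> Q (a + int i)" "Q (a + int n)"
    using ex_least_nat_le[of "\<lambda>n. Q (a + int n)"] by blast
  then have "n \<noteq> 0" using assms(1) by (intro notI) simp
  then have "\<not> Q (a + int n - 1)"
    using n(1)[rule_format, of "n - 1"] by (simp add: of_nat_diff add_diff_eq)
  with n(2) show ?thesis using that by blast
qed

lemma sublevel_threshold:
  fixes r :: "'a \<Rightarrow> int"
  assumes "finite S" "\<not> Q {}" "Q S"
  obtains \<alpha> where "\<not> Q {v \<in> S. r v < \<alpha>}" "Q {v \<in> S. r v \<le> \<alpha>}"
proof -
  have "S \<noteq> {}" using assms(2,3) by auto
  then obtain u where u: "u \<in> S" by blast
  define a where "a = Min (r ` S) - 1"
  define b where "b = Max (r ` S)"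
  have "Min (r ` S) \<le> r v" if "v \<in> S" for v using assms(1) that by simp
  then have "{v \<in> S. r v \<le> a} = {}" unfolding a_def by fastforce
  then have below: "\<not> Q {v \<in> S. r v \<le> a}" using assms(2) by metis
  have "{v \<in> S. r v \<le> b} = S" using assms(1) unfolding b_def by auto
  then have above: "Q {v \<in> S. r v \<le> b}" using assms(3) by metis
  have "a \<le> b"
    using Min_le[OF finite_imageI[OF assms(1)] imageI[of u S r]]
      Max_ge[OF finite_imageI[OF assms(1)] imageI[of u S r]] u unfolding a_def b_def by linarith
  with below above obtain \<alpha> where "\<not> Q {v \<in> S. r v \<le> \<alpha> - 1}" "Q {v \<in> S. r v \<le> \<alpha>}"
    by (rule int_threshold[of "\<lambda>\<beta>. Q {v \<in> S. r v \<le> \<beta>}" a b])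
  moreover have "{v \<in> S. r v < \<alpha>} = {v \<in> S. r v \<le> \<alpha> - 1}" by auto
  ultimately show ?thesis using that by metis
qed

lemma mult_log_mono:
  assumes "1 \<le> a" "a \<le> (b::nat)"
  shows "real a * log 2 (real a) \<le> real b * log 2 (real b)"
  using assms by (intro mult_mono) auto

lemma halving_mult_log_bound:
  fixes k :: nat
  assumes "k \<ge> 2"
  shows "2 * real (k div 2) * log 2 (real (k div 2)) + real k
         + 2 * real (k - k div 2) * log 2 (real (k - k div 2)) \<le> 2 * real k * log 2 (real k)"
proof (cases "even k")
  case True
  then obtain m where k: "k = 2 * m" by blast
  then have "log 2 (real k) = 1 + log 2 (real m)" using assms by (simp add: log_mult)
  then show ?thesis using k by (simp add: algebra_simps)
next
  case False
  then obtain m where k: "k = 2 * m + 1" using oddE by blast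
  then have m: "m \<ge> 1" using assms by simp
  have "1 \<le> (real m)\<^sup>2" using m by (simp add: one_le_power)
  then have "2 * (real m + 1)\<^sup>2 \<le> (2 * real m + 1)\<^sup>2"
    by (simp add: power2_eq_square algebra_simps)
  then have "log 2 (2 * (real m + 1)\<^sup>2) \<le> log 2 ((2 * real m + 1)\<^sup>2)"
    using m by simp
  then have "real k * (1 + 2 * log 2 (real m + 1)) \<le> real k * (2 * log 2 (2 * real m + 1))"
    using m by (intro mult_left_mono) (simp_all add: log_mult log_nat_power)
  moreover have "2 * real m * log 2 (real m) \<le> 2 * real m * log 2 (real m + 1)"
    using m by (intro mult_left_mono) auto
  moreover have "k div 2 = m" "k - k div 2 = m + 1" using k by auto
  ultimately show ?thesis using k by (simp add: algebra_simps)
qed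

lemma halving_recurrence_bound:
  fixes k :: nat and c x\<^sub>A x\<^sub>B x\<^sub>C :: real
  assumes "k \<ge> 2" "c \<ge> 0"
    and "x\<^sub>A \<le> c * real (k div 2) * log 2 (real (k div 2))" and "2 * x\<^sub>B \<le> c * real k"
    and "x\<^sub>C \<le> c * real (k - k div 2) * log 2 (real (k - k div 2))"
  shows "x\<^sub>A + x\<^sub>B + x\<^sub>C \<le> c * real k * log 2 (real k)"
proof -
  have "2 * (x\<^sub>A + x\<^sub>B + x\<^sub>C) \<le> c * (2 * real (k div 2) * log 2 (real (k div 2)) + real k
      + 2 * real (k - k div 2) * log 2 (real (k - k div 2)))"
    using assms(3-5) by (simp add: algebra_simps)
  also have "\<dots> \<le> c * (2 * real k * log 2 (real k))"
    using halving_mult_log_bound[OF assms(1)] assms(2) by (rule mult_left_mono)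
  finally show ?thesis by (simp add: algebra_simps)
qed

lemma dpw_constant_nonneg:
  assumes "dpw_constant d"
  shows "d \<ge> 0"
proof -
  define T :: "nat digraph" where "T = ({}, {})"
  define H :: "nat digraph" where "H = ({0}, {})"
  have T: "verts T = {}" "arcs T = {}" and H: "verts H = {0}" "arcs H = {}"
    by (simp_all add: T_def H_def verts_def arcs_def)
  have "\<not> contains_tm T H"
  proof
    assume "contains_tm T H"
    then obtain \<phi> P where "tm_model T H \<phi> P" unfolding contains_tm_def by blast
    from tm_modelD(2)[OF this] show False by (simp add: T H)
  qed
  moreover have "tournament T" "simple_digraph H"
    unfolding tournament_def simple_digraph_def T H by simp_all
  ultimately have "real (pathwidth T) \<le> d * real (gsize H)"
    using assms unfolding dpw_constant_def by blast
  then show ?thesis unfolding gsize_def H by simp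
qed

lemma interval_decomp_no_back_arc:
  assumes "tournament G" "interval_decomp G l r" "x \<in> verts G" "y \<in> verts G"
    and "r y < \<alpha>" "\<alpha> < l x"
  shows "(x, y) \<notin> arcs G"
proof -
  have "(y, x) \<in> arcs G" "l x \<le> r x"
    using assms(2-6) unfolding interval_decomp_def by auto
  moreover have "x \<noteq> y" using assms(5,6) \<open>l x \<le> r x\<close> by auto
  ultimately show ?thesis using tournament_arc_iff[OF assms(1,3,4)] by blast
qed

lemma balanced_cut:
  fixes T :: "'a digraph" and S :: "'a set"
  defines "G \<equiv> del_verts T (verts T - S)"
  assumes T: "tournament T" and S: "S \<subseteq> verts T" and H: "verts H \<noteq> {}"
    and k\<^sub>1: "k\<^sub>1 \<ge> 1" and packed: "tm_packing T H S k\<^sub>1"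
    and not_packed: "\<not> tm_packing T H S (k\<^sub>1 + k\<^sub>2)" and dec: "interval_decomp G l r"
  obtains A B C where "S = A \<union> B \<union> C" "card B \<le> decomp_width G l r"
    "\<not> tm_packing T H A k\<^sub>1" "\<not> tm_packing T H C k\<^sub>2" "\<forall>x\<in>C. \<forall>y\<in>A. (x, y) \<notin> arcs T"
proof -
  have G: "tournament G" using tournament_del_verts[OF T] unfolding G_def .
  have V: "verts G = S" using S unfolding G_def by auto
  have fin: "finite S" using G V unfolding tournament_def simple_digraph_def by simp
  obtain \<alpha> where A: "\<not> tm_packing T H {v \<in> S. r v < \<alpha>} k\<^sub>1"
    and L: "tm_packing T H {v \<in> S. r v \<le> \<alpha>} k\<^sub>1"
    using sublevel_threshold[of S "\<lambda>X. tm_packing T H X k\<^sub>1" r] fin packed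
      not_tm_packing_empty[OF H k\<^sub>1] by blast
  have lr: "l v \<le> r v" if "v \<in> S" for v
    using dec V that unfolding interval_decomp_def by auto
  let ?A = "{v \<in> S. r v < \<alpha>}" and ?B = "{v \<in> S. l v \<le> \<alpha> \<and> \<alpha> \<le> r v}"
    and ?C = "{v \<in> S. \<alpha> < l v}"
  have "S = ?A \<union> ?B \<union> ?C" by auto
  moreover have "card ?B \<le> decomp_width G l r"
    using card_bag_le_decomp_width[of G l \<alpha> r] fin V by simp
  moreover have "\<not> tm_packing T H ?C k\<^sub>2"
  proof
    assume "tm_packing T H ?C k\<^sub>2"
    moreover have "{v \<in> S. r v \<le> \<alpha>} \<inter> ?C = {}" using lr by force
    ultimately have "tm_packing T H ({v \<in> S. r v \<le> \<alpha>} \<union> ?C) (k\<^sub>1 + k\<^sub>2)"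
      using tm_packing_Un[OF L] by blast
    then have "tm_packing T H S (k\<^sub>1 + k\<^sub>2)" by (rule tm_packing_mono) auto
    then show False using not_packed by contradiction
  qed
  moreover have "(x, y) \<notin> arcs T" if "x \<in> ?C" "y \<in> ?A" for x y
  proof -
    have "(x, y) \<notin> arcs G" using interval_decomp_no_back_arc[OF G dec, of x y \<alpha>] V that by simp
    moreover have "x \<in> S" "y \<in> S" using that by simp_all
    ultimately show ?thesis using S unfolding G_def by auto
  qed
  ultimately show ?thesis using that[of ?A ?B ?C] A by blast
qed

lemma tm_hitting_set_cut_step:
  assumes dpw: "dpw_constant d" and H: "simple_digraph H" "strongly_connected H" "verts H \<noteq> {}"
    and T: "tournament T" and k: "k \<ge> 2" and S: "S \<subseteq> verts T"
    and packed: "tm_packing T H S (k div 2)" and not_packed: "\<not> tm_packing T H S k"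
    and IH: "\<And>j S'. j < k \<Longrightarrow> 1 \<le> j \<Longrightarrow> S' \<subseteq> verts T \<Longrightarrow> \<not> tm_packing T H S' j \<Longrightarrow>
      \<exists>X \<subseteq> S'. real (card X) \<le> 2 * d * real (gsize H) * real j * log 2 (real j)
        \<and> \<not> tm_packing T H (S' - X) 1"
  shows "\<exists>X \<subseteq> S. real (card X) \<le> 2 * d * real (gsize H) * real k * log 2 (real k)
    \<and> \<not> tm_packing T H (S - X) 1"
proof -
  have H_arcs: "arcs H \<subseteq> verts H \<times> verts H" using H(1) by (simp add: simple_digraph_def)
  define k\<^sub>1 k\<^sub>2 where "k\<^sub>1 = k div 2" and "k\<^sub>2 = k - k div 2"
  have k\<^sub>1\<^sub>2: "1 \<le> k\<^sub>1" "k\<^sub>1 < k" "1 \<le> k\<^sub>2" "k\<^sub>2 < k" "k = k\<^sub>1 + k\<^sub>2"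
    using k unfolding k\<^sub>1_def k\<^sub>2_def by auto
  let ?G = "del_verts T (verts T - S)"
  have "verts T - (verts T - S) = S" using S by blast
  then have "\<not> contains_k_disjoint_tm k ?G H"
    using not_packed contains_k_disjoint_tm_del_verts_iff[of k T "verts T - S" H] by simp
  then obtain l r where dec: "interval_decomp ?G l r"
    and width: "real (decomp_width ?G l r) \<le> d * real k * real (gsize H)"
    using interval_decomp_if_not_contains_k_disjoint_tm[OF dpw tournament_del_verts[OF T] H(1)]
    by blast
  have "\<not> tm_packing T H S (k\<^sub>1 + k\<^sub>2)" using not_packed k\<^sub>1\<^sub>2(5) by simp
  then obtain A B C where cut: "S = A \<union> B \<union> C" and B: "card B \<le> decomp_width ?G l r"
    and A: "\<not> tm_packing T H A k\<^sub>1" and C: "\<not> tm_packing T H C k\<^sub>2"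
    and no_back_arc: "\<forall>x\<in>C. \<forall>y\<in>A. (x, y) \<notin> arcs T"
    by (rule balanced_cut[OF T S H(3) k\<^sub>1\<^sub>2(1) packed[folded k\<^sub>1_def] _ dec])
  obtain X\<^sub>A where X\<^sub>A: "X\<^sub>A \<subseteq> A" "\<not> tm_packing T H (A - X\<^sub>A) 1"
    and card_A: "real (card X\<^sub>A) \<le> 2 * d * real (gsize H) * real k\<^sub>1 * log 2 (real k\<^sub>1)"
    using IH[OF k\<^sub>1\<^sub>2(2,1) _ A] S cut by blast
  obtain X\<^sub>C where X\<^sub>C: "X\<^sub>C \<subseteq> C" "\<not> tm_packing T H (C - X\<^sub>C) 1"
    and card_C: "real (card X\<^sub>C) \<le> 2 * d * real (gsize H) * real k\<^sub>2 * log 2 (real k\<^sub>2)"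
    using IH[OF k\<^sub>1\<^sub>2(4,3) _ C] S cut by blast
  have c: "0 \<le> 2 * d * real (gsize H)" using dpw_constant_nonneg[OF dpw] by simp
  have "real (card B) \<le> real (decomp_width ?G l r)" using B by simp
  moreover have "d * real k * real (gsize H) = d * real (gsize H) * real k" by (simp only: mult_ac)
  ultimately have bag: "2 * real (card B) \<le> 2 * d * real (gsize H) * real k"
    using width by linarith
  have "real (card (X\<^sub>A \<union> B \<union> X\<^sub>C)) \<le> real (card X\<^sub>A) + real (card B) + real (card X\<^sub>C)"
    using card_Un_le[of "X\<^sub>A \<union> B" X\<^sub>C] card_Un_le[of X\<^sub>A B] by linarith
  also have "\<dots> \<le> 2 * d * real (gsize H) * real k * log 2 (real k)"
    by (rule halving_recurrence_bound[OF k c card_A[unfolded k\<^sub>1_def] bag card_C[unfolded k\<^sub>2_def]])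
  finally have "real (card (X\<^sub>A \<union> B \<union> X\<^sub>C)) \<le> 2 * d * real (gsize H) * real k * log 2 (real k)" .
  moreover have "\<not> tm_packing T H (S - (X\<^sub>A \<union> B \<union> X\<^sub>C)) 1"
    using not_tm_packing_across_cut[OF H_arcs H(2) no_back_arc X\<^sub>A(2) X\<^sub>C(2)] cut by simp
  moreover have "X\<^sub>A \<union> B \<union> X\<^sub>C \<subseteq> S" using X\<^sub>A(1) X\<^sub>C(1) cut by blast
  ultimately show ?thesis by blast
qed

lemma tm_hitting_set_within:
  assumes dpw: "dpw_constant d" and H: "simple_digraph H" "strongly_connected H" "verts H \<noteq> {}"
    and T: "tournament T"
  shows "k \<ge> 1 \<Longrightarrow> S \<subseteq> verts T \<Longrightarrow> \<not> tm_packing T H S k \<Longrightarrow>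
    \<exists>X \<subseteq> S. real (card X) \<le> 2 * d * real (gsize H) * real k * log 2 (real k)
      \<and> \<not> tm_packing T H (S - X) 1"
proof (induction k arbitrary: S rule: less_induct)
  case (less k)
  consider "k = 1" | "k \<ge> 2" using less.prems(1) by linarith
  then show ?case
  proof cases
    case 1
    then show ?thesis using less.prems(3) by (intro exI[of _ "{}"]) simp
  next
    case 2
    show ?thesis
    proof (cases "tm_packing T H S (k div 2)")
      case True
      from tm_hitting_set_cut_step[OF dpw H T 2 less.prems(2) True less.prems(3) less.IH]
      show ?thesis .
    next
      case False
      have "1 \<le> k div 2" "k div 2 < k" using 2 by auto
      from less.IH[OF this(2,1) less.prems(2) False] obtain X
        where "X \<subseteq> S" "\<not> tm_packing T H (S - X) 1"
          and "real (card X) \<le> 2 * d * real (gsize H) * real (k div 2) * log 2 (real (k div 2))"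
        by blast
      moreover have "2 * d * real (gsize H) * (real (k div 2) * log 2 (real (k div 2)))
          \<le> 2 * d * real (gsize H) * (real k * log 2 (real k))"
        using mult_log_mono[OF \<open>1 \<le> k div 2\<close>] dpw_constant_nonneg[OF dpw]
        by (intro mult_left_mono) simp_all
      ultimately show ?thesis by (auto simp: mult.assoc)
    qed
  qed
qed

theorem lemma21:
  fixes T :: "'a digraph" and H :: "'b digraph" and k :: nat and d :: real
  assumes "dpw_constant d"
    and "simple_digraph H" and "strongly_connected H"
    and "k \<ge> 1"
    and "tournament T"
    and "\<not> contains_k_disjoint_tm k T H"
  shows "\<exists>X. X \<subseteq> verts T \<and> real (card X) \<le> 2 * d * real (gsize H) * real k * log 2 (real k)
             \<and> \<not> contains_tm (del_verts T X) H"
proof -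
  have no_packing: "\<not> tm_packing T H (verts T) k"
    using assms(6) contains_k_disjoint_tm_iff_tm_packing by blast
  then have "verts H \<noteq> {}"
    using tm_packing_empty_pattern assms(2) unfolding simple_digraph_def by blast
  from tm_hitting_set_within[OF assms(1-3) this assms(5,4) order_refl no_packing]
  obtain X where "X \<subseteq> verts T" "\<not> tm_packing T H (verts T - X) 1"
    and "real (card X) \<le> 2 * d * real (gsize H) * real k * log 2 (real k)"
    by blast
  then show ?thesis using contains_tm_del_verts_iff by blast
qed

end
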